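(* Let $\alpha,\beta$ be relatively prime positive integers and let $n$ be a positive integer with $s(n)=s$. Then there exist no integers $a',b'\ge1$ with $n=a'g_s+\beta b'g_{s-1}$. Moreover, a pair $(b,a)$ is $n$-good if and only if $n=ag_{s-1}+\beta b g_{s-2}$ and $a,b\ge1$.
   Context: The $(\alpha,\beta)$-walk $w_k(a_1,a_2)$ for positive integers $a_1,a_2$ is given by $w_1=a_1$, $w_2=a_2$, $w_{k+2}=\alpha w_{k+1}+\beta w_k$ ($k\ge1$). For a positive integer $n$, $s(n;a_1,a_2)$ is the (largest) index $s$ with $w_s(a_1,a_2)=n$ ($-\infty$ if none), and $s(n)=\max_{a_1,a_2\ge1}s(n;a_1,a_2)$. A pair $(a_1,a_2)$ with $a_1,a_2\ge1$ is $n$-good if $s(n;a_1,a_2)=s(n)$. The sequence $g_k$: $g_0=0$, $g_1=1$, $g_2=\alpha$, $g_{k+2}=\alpha g_{k+1}+\beta g_k$ for $k\ge1$. *)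

theory Defs
  imports Main
begin

fun gseq :: "nat \<Rightarrow> nat \<Rightarrow> nat \<Rightarrow> nat" where
  "gseq \<alpha> \<beta> 0 = 0"
| "gseq \<alpha> \<beta> (Suc 0) = 1"
| "gseq \<alpha> \<beta> (Suc (Suc k)) = \<alpha> * gseq \<alpha> \<beta> (Suc k) + \<beta> * gseq \<alpha> \<beta> k"

text \<open>The (alpha,beta)-walk w_k(a1,a2), indexed from k = 1 (the value at index 0 is a dummy).\<close>
fun walk :: "nat \<Rightarrow> nat \<Rightarrow> nat \<Rightarrow> nat \<Rightarrow> nat \<Rightarrow> nat" where
  "walk \<alpha> \<beta> a1 a2 0 = 0"
| "walk \<alpha> \<beta> a1 a2 (Suc 0) = a1"
| "walk \<alpha> \<beta> a1 a2 (Suc (Suc 0)) = a2"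
| "walk \<alpha> \<beta> a1 a2 (Suc (Suc (Suc k))) =
     \<alpha> * walk \<alpha> \<beta> a1 a2 (Suc (Suc k)) + \<beta> * walk \<alpha> \<beta> a1 a2 (Suc k)"

text \<open>s(n;a1,a2): largest index s \<ge> 1 with w_s = n; None plays the role of -infinity.\<close>
definition s_pair :: "nat \<Rightarrow> nat \<Rightarrow> nat \<Rightarrow> nat \<Rightarrow> nat \<Rightarrow> nat option" where
  "s_pair \<alpha> \<beta> n a1 a2 =
     (if \<exists>k. k \<ge> 1 \<and> walk \<alpha> \<beta> a1 a2 k = n
      then Some (Max {k. k \<ge> 1 \<and> walk \<alpha> \<beta> a1 a2 k = n}) else None)"

definition s_max :: "nat \<Rightarrow> nat \<Rightarrow> nat \<Rightarrow> nat" where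
  "s_max \<alpha> \<beta> n =
     Max {k. \<exists>a1 a2. a1 \<ge> 1 \<and> a2 \<ge> 1 \<and> k \<ge> 1 \<and> walk \<alpha> \<beta> a1 a2 k = n}"

definition good :: "nat \<Rightarrow> nat \<Rightarrow> nat \<Rightarrow> nat \<Rightarrow> nat \<Rightarrow> bool" where
  "good \<alpha> \<beta> n a1 a2 \<longleftrightarrow>
     a1 \<ge> 1 \<and> a2 \<ge> 1 \<and> s_pair \<alpha> \<beta> n a1 a2 = Some (s_max \<alpha> \<beta> n)"

end

theory Submission
  imports Defs
begin

text \<open>Unfolding the recursion, w_{k+2}(a_1,a_2) = a_2 g_{k+1} + \<beta> a_1 g_k, and g_k grows at least
  linearly, so only finitely many indices can carry the value n and s(n) is a genuine maximum
  (it is at least 2 because w_2(1,n) = n). If n = a' g_s + \<beta> b' g_{s-1} with a',b' \<ge> 1, then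
  w_{s+1}(b',a') = n, contradicting the maximality of s. A pair (b,a) is n-good exactly when its
  walk reaches n at index s, which by the same formula is n = a g_{s-1} + \<beta> b g_{s-2}.\<close>

lemma walk_eq_gseq:
  "walk \<alpha> \<beta> a1 a2 (Suc (Suc k)) = a2 * gseq \<alpha> \<beta> (Suc k) + \<beta> * a1 * gseq \<alpha> \<beta> k"
proof (induction \<alpha> \<beta> k rule: gseq.induct)
  case (3 \<alpha> \<beta> k)
  then show ?case by (simp add: algebra_simps)
qed simp_all

lemma gseq_Suc_pos: "\<alpha> \<ge> 1 \<Longrightarrow> 0 < gseq \<alpha> \<beta> (Suc k)"
  by (induction \<alpha> \<beta> k rule: gseq.induct) simp_all

lemma gseq_Suc_ge:
  assumes "\<alpha> \<ge> 1" and "\<beta> \<ge> 1"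
  shows "k \<le> gseq \<alpha> \<beta> (Suc k)"
  using assms
proof (induction \<alpha> \<beta> k rule: gseq.induct)
  case (3 \<alpha> \<beta> k)
  have "Suc k \<le> \<alpha> * gseq \<alpha> \<beta> (Suc (Suc k))"
    using 3 by (metis le_trans mult_1 mult_le_mono1)
  moreover have "1 \<le> \<beta> * gseq \<alpha> \<beta> (Suc k)"
    using 3 gseq_Suc_pos[of \<alpha> \<beta> k] by simp
  ultimately show ?case by (subst gseq.simps(3)) linarith
qed simp_all

lemma walk_index_le:
  assumes "\<alpha> \<ge> 1" and "\<beta> \<ge> 1" and "a2 \<ge> 1" and "walk \<alpha> \<beta> a1 a2 k = n"
  shows "k \<le> n + 2"
proof (cases "k < 2")
  case False
  then obtain j where k: "k = Suc (Suc j)"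
    by (metis add_2_eq_Suc le_Suc_ex not_less)
  have "j \<le> gseq \<alpha> \<beta> (Suc j)" using assms gseq_Suc_ge by blast
  also have "\<dots> \<le> a2 * gseq \<alpha> \<beta> (Suc j)" using assms(3) by simp
  also have "\<dots> \<le> n" using assms(4) walk_eq_gseq[of \<alpha> \<beta> a1 a2 j] unfolding k by simp
  finally show ?thesis using k by simp
qed simp

lemma finite_walk_indices:
  assumes "\<alpha> \<ge> 1" and "\<beta> \<ge> 1" and "a2 \<ge> 1"
  shows "finite {k. walk \<alpha> \<beta> a1 a2 k = n}"
  unfolding finite_nat_set_iff_bounded_le using walk_index_le[OF assms] by blast

lemma s_pair_eq_Some_iff:
  assumes "\<alpha> \<ge> 1" and "\<beta> \<ge> 1" and "a2 \<ge> 1"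
  shows "s_pair \<alpha> \<beta> n a1 a2 = Some s \<longleftrightarrow>
    s \<ge> 1 \<and> walk \<alpha> \<beta> a1 a2 s = n \<and> (\<forall>k \<ge> 1. walk \<alpha> \<beta> a1 a2 k = n \<longrightarrow> k \<le> s)"
proof -
  have "finite {k. k \<ge> 1 \<and> walk \<alpha> \<beta> a1 a2 k = n}"
    using finite_walk_indices[OF assms, of a1 n] by (rule rev_finite_subset) blast
  then show ?thesis
    unfolding s_pair_def by (auto simp: Max_eq_iff)
qed

lemma le_s_max:
  assumes "\<alpha> \<ge> 1" and "\<beta> \<ge> 1" and "a1 \<ge> 1" and "a2 \<ge> 1" and "k \<ge> 1"
    and "walk \<alpha> \<beta> a1 a2 k = n"
  shows "k \<le> s_max \<alpha> \<beta> n"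
proof -
  have "{k. \<exists>a1 a2. a1 \<ge> 1 \<and> a2 \<ge> 1 \<and> k \<ge> 1 \<and> walk \<alpha> \<beta> a1 a2 k = n} \<subseteq> {..n + 2}"
    using walk_index_le[OF assms(1,2)] by auto
  then show ?thesis
    unfolding s_max_def using assms by (intro Max_ge) (auto intro: finite_subset)
qed

lemma two_le_s_max:
  assumes "\<alpha> \<ge> 1" and "\<beta> \<ge> 1" and "n \<ge> 1"
  shows "2 \<le> s_max \<alpha> \<beta> n"
  using le_s_max[OF assms(1,2), of 1 n 2] assms(3) by (simp add: numeral_2_eq_2)

lemma good_iff_walk_at_s_max:
  assumes "\<alpha> \<ge> 1" and "\<beta> \<ge> 1" and "n \<ge> 1"
  shows "good \<alpha> \<beta> n a1 a2 \<longleftrightarrow> a1 \<ge> 1 \<and> a2 \<ge> 1 \<and> walk \<alpha> \<beta> a1 a2 (s_max \<alpha> \<beta> n) = n"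
  using s_pair_eq_Some_iff[OF assms(1,2)] le_s_max[OF assms(1,2)] two_le_s_max[OF assms]
  unfolding good_def by auto

theorem corollary2p3:
  fixes \<alpha> \<beta> n :: nat
  assumes "\<alpha> \<ge> 1" and "\<beta> \<ge> 1" and "coprime \<alpha> \<beta>" and "n \<ge> 1"
  shows "let s = s_max \<alpha> \<beta> n in
     (\<not> (\<exists>a' b'. a' \<ge> 1 \<and> b' \<ge> 1 \<and>
             n = a' * gseq \<alpha> \<beta> s + \<beta> * b' * gseq \<alpha> \<beta> (s - 1))) \<and>
     (\<forall>a b. good \<alpha> \<beta> n b a \<longleftrightarrow>
             (n = a * gseq \<alpha> \<beta> (s - 1) + \<beta> * b * gseq \<alpha> \<beta> (s - 2) \<and> a \<ge> 1 \<and> b \<ge> 1))"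
proof -
  define s where "s = s_max \<alpha> \<beta> n"
  obtain j where s_eq: "s = Suc (Suc j)"
    using two_le_s_max[OF assms(1,2,4)] unfolding s_def by (metis add_2_eq_Suc le_Suc_ex)
  have no_continuation: "\<not> (a' \<ge> 1 \<and> b' \<ge> 1 \<and> n = a' * gseq \<alpha> \<beta> s + \<beta> * b' * gseq \<alpha> \<beta> (s - 1))"
    for a' b'
  proof
    assume "a' \<ge> 1 \<and> b' \<ge> 1 \<and> n = a' * gseq \<alpha> \<beta> s + \<beta> * b' * gseq \<alpha> \<beta> (s - 1)"
    then have "walk \<alpha> \<beta> b' a' (Suc s) = n" "a' \<ge> 1" "b' \<ge> 1"
      using walk_eq_gseq[of \<alpha> \<beta> b' a' "Suc j"] unfolding s_eq
      by (simp_all del: walk.simps gseq.simps)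
    then have "Suc s \<le> s"
      using le_s_max[OF assms(1,2), of b' a' "Suc s"] unfolding s_def by simp
    then show False by simp
  qed
  have "good \<alpha> \<beta> n b a \<longleftrightarrow>
      n = a * gseq \<alpha> \<beta> (s - 1) + \<beta> * b * gseq \<alpha> \<beta> (s - 2) \<and> a \<ge> 1 \<and> b \<ge> 1" for a b
    using good_iff_walk_at_s_max[OF assms(1,2,4)] walk_eq_gseq[of \<alpha> \<beta> b a j]
    unfolding s_def[symmetric] s_eq by (auto simp del: walk.simps gseq.simps)
  then show ?thesis
    using no_continuation unfolding s_def[symmetric] Let_def by blast
qed

end
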